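(* Let $\nu$ be a measure on $\mathcal B(\mathbb R)^U$ satisfying $\int_{\mathbb R^U}1\wedge|\pi_u(x)|^2\,\nu(dx)<\infty$ for all $u\in U$. Then $\nu$ does not charge zero if and only if $\nu$ is $\sigma$-finite and for every $A\in\mathcal B(\mathbb R)^U$ there exists a countable $U_A\subset U$ such that $\nu(A)=\nu(A\setminus\pi_{U_A}^{-1}(0^{U_A}))$.
   Context: $U$ is a non-empty index set, $\mathcal B(\mathbb R)^U$ the cylindrical (product) $\sigma$-algebra on $\mathbb R^U$, $\pi_V\colon\mathbb R^U\to\mathbb R^V$ the coordinate projection for $V\subset U$ ($\pi_u$ for $V=\{u\}$), $0^V$ the zero element of $\mathbb R^V$. A measure $\nu$ on $\mathcal B(\mathbb R)^U$ does not charge zero if there exists a countable $U_0\subset U$ with $\nu(\pi_{U_0}^{-1}(0^{U_0}))=0$. *)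

theory Defs
  imports "HOL-Analysis.Analysis"
begin

text \<open>Cylindrical sigma-algebra on R^U: the product measurable space PiM U (\<lambda>_. borel).
  Preimage of the zero element of R^V under the projection pi_V.\<close>
definition zero_cyl :: "'u set \<Rightarrow> ('u \<Rightarrow> real) measure \<Rightarrow> ('u \<Rightarrow> real) set" where
  "zero_cyl V M = {x \<in> space M. \<forall>v\<in>V. x v = 0}"

definition does_not_charge_zero :: "'u set \<Rightarrow> ('u \<Rightarrow> real) measure \<Rightarrow> bool" where
  "does_not_charge_zero U M \<longleftrightarrow>
     (\<exists>U0. U0 \<subseteq> U \<and> countable U0 \<and> emeasure M (zero_cyl U0 M) = 0)"

end

theory Submission
  imports Defs
begin

text \<open>If \<open>\<nu>\<close> does not charge zero, say \<open>\<nu>(Z) = 0\<close> for the zero cylinder \<open>Z\<close> of a countable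
  \<open>U\<^sub>0\<close>, then every set differs from its part outside \<open>Z\<close> by a null set, and the complement of
  \<open>Z\<close> is covered by the countably many sets \<open>{min 1 |x u|\<^sup>2 \<ge> 1/(n+1)}\<close>, \<open>u \<in> U\<^sub>0\<close>, each of finite
  measure by the integrability hypothesis (Markov). Conversely, take a countable cover of the
  space by sets \<open>A\<^sub>i\<close> of finite measure; each \<open>A\<^sub>i\<close> meets the zero cylinder of some countable
  \<open>V\<^sub>i\<close> in a null set, so the zero cylinder of \<open>\<Union>\<^sub>i V\<^sub>i\<close> is null.\<close>

lemma measurable_component_of_sets_PiM:
  assumes "sets M = sets (PiM U (\<lambda>_. borel))" "u \<in> U"
  shows "(\<lambda>x. x u) \<in> borel_measurable M"
  using measurable_component_singleton[OF assms(2), of "\<lambda>_. borel"]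
    measurable_cong_sets[OF assms(1) refl] by blast

lemma zero_cyl_in_sets:
  assumes "sets M = sets (PiM U (\<lambda>_. borel))" "countable V" "V \<subseteq> U"
  shows "zero_cyl V M \<in> sets M"
proof (cases "V = {}")
  case True
  then show ?thesis by (simp add: zero_cyl_def)
next
  case False
  have "zero_cyl V M = (\<Inter>v\<in>V. {x\<in>space M. x v = 0})"
    using False by (auto simp: zero_cyl_def)
  also have "\<dots> \<in> sets M"
  proof (rule sets.countable_INT'[OF assms(2) False])
    have "{x\<in>space M. x v = 0} \<in> sets M" if "v \<in> V" for v
      using measurable_component_of_sets_PiM[OF assms(1) subsetD[OF assms(3) that]]
      by measurable
    then show "(\<lambda>v. {x\<in>space M. x v = 0}) ` V \<subseteq> sets M" by blast
  qed
  finally show ?thesis .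
qed

lemma zero_cyl_antimono: "V \<subseteq> W \<Longrightarrow> zero_cyl W M \<subseteq> zero_cyl V M"
  by (auto simp: zero_cyl_def)

lemma emeasure_superlevel_finite:
  assumes "g \<in> borel_measurable M" "(\<integral>\<^sup>+ x. ennreal (g x) \<partial>M) < \<infinity>" "c > 0"
  shows "emeasure M {x\<in>space M. c \<le> g x} \<noteq> \<infinity>"
proof -
  let ?S = "{x\<in>space M. c \<le> g x}"
  have S: "?S \<in> sets M" using assms(1) by measurable
  have "ennreal c * emeasure M ?S = (\<integral>\<^sup>+ x. ennreal c * indicator ?S x \<partial>M)"
    using S by (simp add: nn_integral_cmult_indicator)
  also have "\<dots> \<le> (\<integral>\<^sup>+ x. ennreal (g x) \<partial>M)"
    by (intro nn_integral_mono) (auto simp: indicator_def intro: ennreal_leI)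
  finally have "ennreal c * emeasure M ?S < \<infinity>" using assms(2) by simp
  then show ?thesis using assms(3) by (auto simp: ennreal_mult_less_top)
qed

lemma positive_subset_UN_superlevel:
  "{x\<in>S. 0 < g x} \<subseteq> (\<Union>n. {x\<in>S. 1 / real (Suc n) \<le> (g x :: real)})"
proof
  fix x assume "x \<in> {x\<in>S. 0 < g x}"
  then obtain n where "x \<in> S" "inverse (real (Suc n)) < g x"
    using reals_Archimedean by blast
  then have "x \<in> {x\<in>S. 1 / real (Suc n) \<le> g x}"
    by (simp add: divide_inverse)
  then show "x \<in> (\<Union>n. {x\<in>S. 1 / real (Suc n) \<le> g x})"
    by blast
qed

lemma sigma_finite_measure_if_null_and_finite_cover:
  assumes "Z \<in> null_sets M" "countable \<A>" "\<A> \<subseteq> sets M" "\<And>A. A \<in> \<A> \<Longrightarrow> emeasure M A \<noteq> \<infinity>"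
    and "space M - Z \<subseteq> \<Union>\<A>"
  shows "sigma_finite_measure M"
proof
  have Z: "Z \<in> sets M" "emeasure M Z \<noteq> \<infinity>" using assms(1) by auto
  have "insert Z \<A> \<subseteq> sets M" using Z(1) assms(3) by blast
  then have "\<Union>(insert Z \<A>) \<subseteq> space M"
    by (intro Union_least sets.sets_into_space) blast
  then have "\<Union>(insert Z \<A>) = space M" using assms(5) by blast
  then show "\<exists>\<B>. countable \<B> \<and> \<B> \<subseteq> sets M \<and> \<Union>\<B> = space M \<and> (\<forall>B\<in>\<B>. emeasure M B \<noteq> \<infinity>)"
    using Z assms(2-4) by (intro exI[of _ "insert Z \<A>"]) simp
qed

lemma emeasure_Int_eq_0_if_emeasure_Diff_eq:
  assumes "A \<in> sets M" "B \<in> sets M" "emeasure M A \<noteq> \<infinity>"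
    and "emeasure M (A - B) = emeasure M A"
  shows "emeasure M (A \<inter> B) = 0"
proof -
  have "emeasure M (A \<inter> B) + emeasure M (A - B) = emeasure M ((A \<inter> B) \<union> (A - B))"
    using assms(1,2) by (intro plus_emeasure) auto
  also have "(A \<inter> B) \<union> (A - B) = A" by blast
  finally have "emeasure M (A \<inter> B) + emeasure M (A - B) = emeasure M A" .
  then have "emeasure M (A \<inter> B) + emeasure M A = 0 + emeasure M A"
    using assms(4) by simp
  then show ?thesis using assms(3) by (metis add.commute ennreal_add_left_cancel)
qed

lemma sigma_finite_if_zero_cyl_null:
  assumes "sets \<nu> = sets (PiM U (\<lambda>_. borel))"
    and "\<And>u. u \<in> U \<Longrightarrow> (\<integral>\<^sup>+ x. ennreal (min 1 (\<bar>x u\<bar>\<^sup>2)) \<partial>\<nu>) < \<infinity>"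
    and "U0 \<subseteq> U" "countable U0" "zero_cyl U0 \<nu> \<in> null_sets \<nu>"
  shows "sigma_finite_measure \<nu>"
proof -
  define B where "B = (\<lambda>(u, n). {x\<in>space \<nu>. 1 / real (Suc n) \<le> min 1 (\<bar>x u\<bar>\<^sup>2)})"
  have B_sets: "B (u, n) \<in> sets \<nu>" and B_finite: "emeasure \<nu> (B (u, n)) \<noteq> \<infinity>"
    if u: "u \<in> U" for u n
  proof -
    have meas: "(\<lambda>x. min 1 (\<bar>x u\<bar>\<^sup>2)) \<in> borel_measurable \<nu>"
      using measurable_component_of_sets_PiM[OF assms(1) u] by measurable
    then show "B (u, n) \<in> sets \<nu>"
      unfolding B_def prod.case by (intro borel_measurable_le) auto
    show "emeasure \<nu> (B (u, n)) \<noteq> \<infinity>"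
      unfolding B_def prod.case
      by (rule emeasure_superlevel_finite[OF meas assms(2)[OF u]]) simp
  qed
  have "space \<nu> - zero_cyl U0 \<nu> \<subseteq> (\<Union>u\<in>U0. {x\<in>space \<nu>. 0 < min 1 (\<bar>x u\<bar>\<^sup>2)})"
    by (auto simp: zero_cyl_def)
  also have "\<dots> \<subseteq> (\<Union>u\<in>U0. \<Union>n. B (u, n))"
    unfolding B_def prod.case by (intro UN_mono order.refl positive_subset_UN_superlevel)
  also have "\<dots> = \<Union>(B ` (U0 \<times> UNIV))"
    by auto
  finally have cover: "space \<nu> - zero_cyl U0 \<nu> \<subseteq> \<Union>(B ` (U0 \<times> UNIV))" .
  show ?thesis
  proof (rule sigma_finite_measure_if_null_and_finite_cover[OF assms(5) _ _ _ cover])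
    show "countable (B ` (U0 \<times> UNIV))"
      using assms(4) by (intro countable_image countable_SIGMA) auto
    show "B ` (U0 \<times> UNIV) \<subseteq> sets \<nu>"
      using B_sets assms(3) by blast
    show "emeasure \<nu> A \<noteq> \<infinity>" if "A \<in> B ` (U0 \<times> UNIV)" for A
      using that B_finite assms(3) by blast
  qed
qed

lemma does_not_charge_zero_if_sigma_finite:
  assumes "sets \<nu> = sets (PiM U (\<lambda>_. borel))" "sigma_finite_measure \<nu>"
    and "\<And>A. A \<in> sets \<nu> \<Longrightarrow> \<exists>UA. UA \<subseteq> U \<and> countable UA \<and>
           emeasure \<nu> A = emeasure \<nu> (A - zero_cyl UA \<nu>)"
  shows "does_not_charge_zero U \<nu>"
proof -
  obtain A :: "nat \<Rightarrow> _" where A: "range A \<subseteq> sets \<nu>" "(\<Union>i. A i) = space \<nu>"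
      "\<And>i. emeasure \<nu> (A i) \<noteq> \<infinity>"
    using sigma_finite_measure.sigma_finite[OF assms(2)] by metis
  have "\<forall>i. \<exists>UA. UA \<subseteq> U \<and> countable UA \<and> emeasure \<nu> (A i) = emeasure \<nu> (A i - zero_cyl UA \<nu>)"
    using assms(3) A(1) by blast
  then obtain V where V: "\<And>i. V i \<subseteq> U" "\<And>i. countable (V i)"
      "\<And>i. emeasure \<nu> (A i) = emeasure \<nu> (A i - zero_cyl (V i) \<nu>)"
    by metis
  define U0 where "U0 = (\<Union>i. V i)"
  have U0: "U0 \<subseteq> U" "countable U0" using V by (auto simp: U0_def)
  have "zero_cyl U0 \<nu> = (\<Union>i. A i \<inter> zero_cyl U0 \<nu>)"
    using A(2) by (auto simp: zero_cyl_def)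
  also have "emeasure \<nu> \<dots> = 0"
  proof (rule emeasure_UN_eq_0)
    show "range (\<lambda>i. A i \<inter> zero_cyl U0 \<nu>) \<subseteq> sets \<nu>"
      using zero_cyl_in_sets[OF assms(1) U0(2,1)] A(1) by auto
  next
    fix i
    have Vi: "zero_cyl (V i) \<nu> \<in> sets \<nu>" and Ai: "A i \<in> sets \<nu>"
      using zero_cyl_in_sets[OF assms(1) V(2,1)] A(1) by auto
    have "A i \<inter> zero_cyl U0 \<nu> \<subseteq> A i \<inter> zero_cyl (V i) \<nu>"
      using zero_cyl_antimono[of "V i" U0 \<nu>] by (auto simp: U0_def)
    then have "emeasure \<nu> (A i \<inter> zero_cyl U0 \<nu>) \<le> emeasure \<nu> (A i \<inter> zero_cyl (V i) \<nu>)"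
      using Ai Vi by (intro emeasure_mono) auto
    also have "\<dots> = 0"
      by (rule emeasure_Int_eq_0_if_emeasure_Diff_eq[OF Ai Vi A(3) V(3)[symmetric]])
    finally show "emeasure \<nu> (A i \<inter> zero_cyl U0 \<nu>) = 0" by simp
  qed
  finally show ?thesis
    unfolding does_not_charge_zero_def using U0 by blast
qed

theorem lemmaA2:
  fixes U :: "'u set" and \<nu> :: "('u \<Rightarrow> real) measure"
  assumes "U \<noteq> {}"
    and "sets \<nu> = sets (PiM U (\<lambda>_. borel))"
    and "\<And>u. u \<in> U \<Longrightarrow> (\<integral>\<^sup>+ x. ennreal (min 1 (\<bar>x u\<bar>\<^sup>2)) \<partial>\<nu>) < \<infinity>"
  shows "does_not_charge_zero U \<nu> \<longleftrightarrow>
    (sigma_finite_measure \<nu> \<and>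
     (\<forall>A \<in> sets \<nu>. \<exists>UA. UA \<subseteq> U \<and> countable UA \<and>
        emeasure \<nu> A = emeasure \<nu> (A - zero_cyl UA \<nu>)))"
proof
  assume "does_not_charge_zero U \<nu>"
  then obtain U0 where U0: "U0 \<subseteq> U" "countable U0" "emeasure \<nu> (zero_cyl U0 \<nu>) = 0"
    by (auto simp: does_not_charge_zero_def)
  then have null: "zero_cyl U0 \<nu> \<in> null_sets \<nu>"
    using zero_cyl_in_sets[OF assms(2) U0(2,1)] by blast
  have "emeasure \<nu> A = emeasure \<nu> (A - zero_cyl U0 \<nu>)" if "A \<in> sets \<nu>" for A
    using emeasure_Diff_null_set[OF null that] by (rule sym)
  then show "sigma_finite_measure \<nu> \<and> (\<forall>A \<in> sets \<nu>. \<exists>UA. UA \<subseteq> U \<and> countable UA \<and>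
        emeasure \<nu> A = emeasure \<nu> (A - zero_cyl UA \<nu>))"
    using sigma_finite_if_zero_cyl_null[OF assms(2,3) U0(1,2) null] U0(1,2) by blast
next
  assume "sigma_finite_measure \<nu> \<and> (\<forall>A \<in> sets \<nu>. \<exists>UA. UA \<subseteq> U \<and> countable UA \<and>
        emeasure \<nu> A = emeasure \<nu> (A - zero_cyl UA \<nu>))"
  then show "does_not_charge_zero U \<nu>"
    by (intro does_not_charge_zero_if_sigma_finite[OF assms(2)]) simp_all
qed

end
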